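(* Let $\mathfrak{g}$ be a complex simple Lie algebra with Cartan subalgebra $\mathfrak{h}$, root system $\Delta$, positive roots $\Delta^+$ and simple roots $\Pi$; let $\Sigma\subset\Pi$, $\mathfrak{p}=\mathfrak{l}\oplus\mathfrak{u}$ the associated standard parabolic subalgebra and $\bar{\mathfrak{u}}=\bigoplus_{\alpha\in\Delta(\mathfrak{u})}\mathfrak{g}_{-\alpha}$ its opposite nilradical, $\Delta(\mathfrak{u})=\Delta^+\setminus\Delta^+_\Sigma$. Let $\{f_\alpha;\alpha\in\Delta(\mathfrak{u})\}$ be a basis of $\bar{\mathfrak{u}}$, and let $x_{\alpha,n}$ ($\alpha\in\Delta(\mathfrak{u}),n\in\mathbb{Z}$) be commuting variables which commute with $\widehat{\mathfrak{g}}$. Put $u(x)=\sum_{\alpha\in\Delta(\mathfrak{u})}\sum_{n\in\mathbb{Z}}x_{\alpha,n}f_{\alpha,n}$ where $f_{\alpha,n}=f_\alpha\otimes t^n$, $a^*_\alpha(z)=\sum_{n\in\mathbb{Z}}x_{\alpha,-n}z^{-n}$ and $u(z)=\sum_{\alpha\in\Delta(\mathfrak{u})}a^*_\alpha(z)f_\alpha$. Then for all $a\in\mathfrak{g}$ and $k\in\mathbb{N}$, $$(\operatorname{ad}(u(x)))^k(a(z))=(\operatorname{ad}(u(z)))^k(a(z))+(-1)^{k-1}\big((\operatorname{ad}(u(z)))^{k-1}(\partial_z u(z)),a\big)c.$$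
   Context: $(\cdot,\cdot)$ is the $\mathfrak{g}$-invariant symmetric bilinear form on $\mathfrak{g}$ normalized by $(\theta,\theta)=2$ for the maximal root $\theta$. The affine Kac-Moody algebra is $\widehat{\mathfrak{g}}=\mathfrak{g}\otimes\mathbb{C}((t))\oplus\mathbb{C}c$ with $c$ central and $[a_m,b_n]=[a,b]_{m+n}+m(a,b)\delta_{m,-n}c$, where $a_n=a\otimes t^n$. For $a\in\mathfrak{g}$, $a(z)=\sum_{n\in\mathbb{Z}}a_nz^{-n-1}$. The left side is computed in $\widehat{\mathfrak{g}}$ with coefficients polynomial in the $x$'s. On the right, $\mathfrak{g}\otimes P(z)$ (with $P(z)$ the polynomial algebra in the $a^*_\alpha(z)$) is a Lie algebra over $P(z)$, and an element $\sum_r P_r(z)b_r$ ($b_r\in\mathfrak{g}$, $P_r(z)\in P(z)$) is identified with $\sum_rP_r(z)b_r(z)$; in particular $(\operatorname{ad}u(z))^k(a(z))$ means $(\operatorname{ad}u(z))^k(a)$ with each $b\in\mathfrak{g}$ replaced by $b(z)$. The form $(\cdot,\cdot)$ is extended $P(z)$-bilinearly, and $\partial_zu(z)=\sum_\alpha\partial_za^*_\alpha(z)f_\alpha$. *)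

theory Defs
  imports "HOL-Analysis.Analysis" "HOL-Library.Multiset"
begin

text \<open>The Lie algebra g is modelled as the complex vector space complex^'n
 (any finite dimension) with a bracket br.  Linear functionals on h
 (elements of h-dual) are functions g => complex that are linear on h and
 vanish outside h.\<close>

type_synonym 'n g = "complex ^ 'n"
type_synonym 'n hd = "'n g \<Rightarrow> complex"

definition lie_algebra :: "(('n::finite) g \<Rightarrow> ('n::finite) g \<Rightarrow> ('n::finite) g) \<Rightarrow> bool" where
  "lie_algebra br \<longleftrightarrow>
     (\<forall>x y z. br (x + y) z = br x z + br y z) \<and>
     (\<forall>x y z. br x (y + z) = br x y + br x z) \<and>
     (\<forall>c x y. br (c *s x) y = c *s br x y) \<and>
     (\<forall>c x y. br x (c *s y) = c *s br x y) \<and>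
     (\<forall>x. br x x = 0) \<and>
     (\<forall>x y z. br x (br y z) + br y (br z x) + br z (br x y) = 0)"

definition lie_ideal :: "(('n::finite) g \<Rightarrow> ('n::finite) g \<Rightarrow> ('n::finite) g) \<Rightarrow> ('n::finite) g set \<Rightarrow> bool" where
  "lie_ideal br I \<longleftrightarrow> vec.subspace I \<and> (\<forall>x\<in>I. \<forall>y. br y x \<in> I)"

definition simple_lie :: "(('n::finite) g \<Rightarrow> ('n::finite) g \<Rightarrow> ('n::finite) g) \<Rightarrow> bool" where
  "simple_lie br \<longleftrightarrow> lie_algebra br \<and> (\<exists>x y. br x y \<noteq> 0) \<and>
     (\<forall>I. lie_ideal br I \<longrightarrow> I = {0} \<or> I = UNIV)"

definition lie_subalgebra :: "(('n::finite) g \<Rightarrow> ('n::finite) g \<Rightarrow> ('n::finite) g) \<Rightarrow> ('n::finite) g set \<Rightarrow> bool" where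
  "lie_subalgebra br h \<longleftrightarrow> vec.subspace h \<and> (\<forall>x\<in>h. \<forall>y\<in>h. br x y \<in> h)"

definition lie_nilpotent :: "(('n::finite) g \<Rightarrow> ('n::finite) g \<Rightarrow> ('n::finite) g) \<Rightarrow> ('n::finite) g set \<Rightarrow> bool" where
  "lie_nilpotent br h \<longleftrightarrow>
     (\<exists>m. \<forall>xs y. set xs \<subseteq> h \<longrightarrow> length xs = m \<longrightarrow> y \<in> h \<longrightarrow> foldr br xs y = 0)"

definition cartan_subalgebra :: "(('n::finite) g \<Rightarrow> ('n::finite) g \<Rightarrow> ('n::finite) g) \<Rightarrow> ('n::finite) g set \<Rightarrow> bool" where
  "cartan_subalgebra br h \<longleftrightarrow> lie_subalgebra br h \<and> lie_nilpotent br h \<and>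
     (\<forall>x. (\<forall>y\<in>h. br x y \<in> h) \<longrightarrow> x \<in> h)"

definition hdual :: "('n::finite) g set \<Rightarrow> ('n::finite) hd \<Rightarrow> bool" where
  "hdual h \<alpha> \<longleftrightarrow> (\<forall>x\<in>h. \<forall>y\<in>h. \<alpha> (x + y) = \<alpha> x + \<alpha> y) \<and>
     (\<forall>c. \<forall>x\<in>h. \<alpha> (c *s x) = c * \<alpha> x) \<and> (\<forall>x. x \<notin> h \<longrightarrow> \<alpha> x = 0)"

definition rootspace :: "(('n::finite) g \<Rightarrow> ('n::finite) g \<Rightarrow> ('n::finite) g) \<Rightarrow> ('n::finite) g set \<Rightarrow> ('n::finite) hd \<Rightarrow> ('n::finite) g set" where
  "rootspace br h \<alpha> = {x. \<forall>H\<in>h. br H x = \<alpha> H *s x}"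

definition roots :: "(('n::finite) g \<Rightarrow> ('n::finite) g \<Rightarrow> ('n::finite) g) \<Rightarrow> ('n::finite) g set \<Rightarrow> ('n::finite) hd set" where
  "roots br h = {\<alpha>. hdual h \<alpha> \<and> \<alpha> \<noteq> (\<lambda>_. 0) \<and> rootspace br h \<alpha> \<noteq> {0}}"

definition nn_comb :: "('n::finite) hd set \<Rightarrow> ('n::finite) hd \<Rightarrow> bool" where
  "nn_comb S \<beta> \<longleftrightarrow> (\<exists>c :: ('n::finite) hd \<Rightarrow> nat. \<beta> = (\<lambda>x. \<Sum>\<alpha>\<in>S. of_nat (c \<alpha>) * \<alpha> x))"

definition is_base :: "(('n::finite) g \<Rightarrow> ('n::finite) g \<Rightarrow> ('n::finite) g) \<Rightarrow> ('n::finite) g set \<Rightarrow> ('n::finite) hd set \<Rightarrow> bool" where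
  "is_base br h P \<longleftrightarrow> finite P \<and> P \<subseteq> roots br h \<and>
     (\<forall>c :: ('n::finite) hd \<Rightarrow> complex. (\<lambda>x. \<Sum>\<alpha>\<in>P. c \<alpha> * \<alpha> x) = (\<lambda>_. 0) \<longrightarrow> (\<forall>\<alpha>\<in>P. c \<alpha> = 0)) \<and>
     (\<forall>\<beta>\<in>roots br h. nn_comb P \<beta> \<or> nn_comb P (\<lambda>x. - \<beta> x))"

definition pos_roots :: "(('n::finite) g \<Rightarrow> ('n::finite) g \<Rightarrow> ('n::finite) g) \<Rightarrow> ('n::finite) g set \<Rightarrow> ('n::finite) hd set \<Rightarrow> ('n::finite) hd set" where
  "pos_roots br h P = {\<beta>\<in>roots br h. nn_comb P \<beta>}"

definition highest_root :: "(('n::finite) g \<Rightarrow> ('n::finite) g \<Rightarrow> ('n::finite) g) \<Rightarrow> ('n::finite) g set \<Rightarrow> ('n::finite) hd set \<Rightarrow> ('n::finite) hd \<Rightarrow> bool" where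
  "highest_root br h P \<theta> \<longleftrightarrow> \<theta> \<in> roots br h \<and> (\<forall>\<beta>\<in>roots br h. nn_comb P (\<lambda>x. \<theta> x - \<beta> x))"

definition invariant_form :: "(('n::finite) g \<Rightarrow> ('n::finite) g \<Rightarrow> ('n::finite) g) \<Rightarrow> (('n::finite) g \<Rightarrow> ('n::finite) g \<Rightarrow> complex) \<Rightarrow> bool" where
  "invariant_form br B \<longleftrightarrow>
     (\<forall>x y z. B (x + y) z = B x z + B y z) \<and> (\<forall>c x y. B (c *s x) y = c * B x y) \<and>
     (\<forall>x y. B x y = B y x) \<and> (\<forall>x y z. B (br x y) z = B x (br y z))"

text \<open>(theta,theta) = 2 for the form induced on h-dual.\<close>
definition normalized_form :: "(('n::finite) g \<Rightarrow> ('n::finite) g \<Rightarrow> ('n::finite) g) \<Rightarrow> ('n::finite) g set \<Rightarrow> ('n::finite) hd set \<Rightarrow> (('n::finite) g \<Rightarrow> ('n::finite) g \<Rightarrow> complex) \<Rightarrow> bool" where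
  "normalized_form br h P B \<longleftrightarrow> (\<exists>\<theta>. highest_root br h P \<theta> \<and>
     (\<exists>t\<in>h. (\<forall>H\<in>h. B t H = \<theta> H) \<and> B t t = 2))"

definition Delta_u :: "(('n::finite) g \<Rightarrow> ('n::finite) g \<Rightarrow> ('n::finite) g) \<Rightarrow> ('n::finite) g set \<Rightarrow> ('n::finite) hd set \<Rightarrow> ('n::finite) hd set \<Rightarrow> ('n::finite) hd set" where
  "Delta_u br h P S = pos_roots br h P - {\<beta>\<in>pos_roots br h P. nn_comb S \<beta>}"

definition ubar :: "(('n::finite) g \<Rightarrow> ('n::finite) g \<Rightarrow> ('n::finite) g) \<Rightarrow> ('n::finite) g set \<Rightarrow> ('n::finite) hd set \<Rightarrow> ('n::finite) hd set \<Rightarrow> ('n::finite) g set" where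
  "ubar br h P S = vec.span (\<Union>\<alpha>\<in>Delta_u br h P S. rootspace br h (\<lambda>x. - \<alpha> x))"

text \<open>Monomials in the variables x_(alpha,n) are multisets of pairs (alpha,n).\<close>
type_synonym 'n mono = "('n hd \<times> int) multiset"

text \<open>Completed space for the left side: an element is given by the coefficient
 (in g) of  M * z^j * (b tensor t^p)  and the coefficient (in C) of  M * z^j * c.\<close>
type_synonym 'n W = "('n mono \<Rightarrow> int \<Rightarrow> int \<Rightarrow> 'n g) \<times> ('n mono \<Rightarrow> int \<Rightarrow> complex)"

definition addW :: "('n::finite) W \<Rightarrow> ('n::finite) W \<Rightarrow> ('n::finite) W" where
  "addW v w = ((\<lambda>M j p. fst v M j p + fst w M j p), (\<lambda>M j. snd v M j + snd w M j))"

text \<open>a(z) = sum_m a_m z^(-m-1).\<close>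
definition currentW :: "('n::finite) g \<Rightarrow> ('n::finite) W" where
  "currentW a = ((\<lambda>M j p. if M = {#} \<and> j = - p - 1 then a else 0), (\<lambda>M j. 0))"

text \<open>ad(u(x)) with u(x) = sum x_(alpha,n) f_(alpha,n), using
 [b_m, b'_n] = [b,b']_(m+n) + m (b,b') delta_(m,-n) c.\<close>
definition adUx :: "(('n::finite) g \<Rightarrow> ('n::finite) g \<Rightarrow> ('n::finite) g) \<Rightarrow> (('n::finite) g \<Rightarrow> ('n::finite) g \<Rightarrow> complex) \<Rightarrow> ('n::finite) hd set
                    \<Rightarrow> (('n::finite) hd \<Rightarrow> ('n::finite) g) \<Rightarrow> ('n::finite) W \<Rightarrow> ('n::finite) W" where
  "adUx br B D f w =
    ((\<lambda>M j p. \<Sum>q\<in>{q\<in>set_mset M. fst q \<in> D}. br (f (fst q)) (fst w (M - {#q#}) j (p - snd q))),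
     (\<lambda>M j. \<Sum>q\<in>{q\<in>set_mset M. fst q \<in> D}. of_int (snd q) * B (f (fst q)) (fst w (M - {#q#}) j (- snd q))))"

text \<open>g-valued formal series in the x's and z: coefficient of M * z^j.
 This contains g tensor P(z), where a*_alpha(z) = sum_m x_(alpha,m) z^m.\<close>
type_synonym 'n GS = "'n mono \<Rightarrow> int \<Rightarrow> 'n g"

text \<open>Bracket of g-valued series, bilinear over the scalar series
 (all series occurring have, for each monomial, finitely many z-powers).\<close>
definition brS :: "(('n::finite) g \<Rightarrow> ('n::finite) g \<Rightarrow> ('n::finite) g) \<Rightarrow> ('n::finite) GS \<Rightarrow> ('n::finite) GS \<Rightarrow> ('n::finite) GS" where
  "brS br U V = (\<lambda>M j. \<Sum>M1\<in>{M1. M1 \<subseteq># M}. \<Sum>j1\<in>{j1. U M1 j1 \<noteq> 0}.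
                         br (U M1 j1) (V (M - M1) (j - j1)))"

definition uz :: "('n::finite) hd set \<Rightarrow> (('n::finite) hd \<Rightarrow> ('n::finite) g) \<Rightarrow> ('n::finite) GS" where
  "uz D f = (\<lambda>M j. \<Sum>q\<in>{q. M = {#q#} \<and> fst q \<in> D \<and> snd q = j}. f (fst q))"

definition constS :: "('n::finite) g \<Rightarrow> ('n::finite) GS" where
  "constS a = (\<lambda>M j. if M = {#} \<and> j = 0 then a else 0)"

definition dzS :: "('n::finite) GS \<Rightarrow> ('n::finite) GS" where
  "dzS U = (\<lambda>M j. of_int (j + 1) *s U M (j + 1))"

text \<open>Replace each b in g by b(z) = sum_p b_p z^(-p-1).\<close>
definition realizeW :: "('n::finite) GS \<Rightarrow> ('n::finite) W" where
  "realizeW V = ((\<lambda>M j p. V M (j + p + 1)), (\<lambda>M j. 0))"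

definition centralW :: "(('n::finite) mono \<Rightarrow> int \<Rightarrow> complex) \<Rightarrow> ('n::finite) W" where
  "centralW s = ((\<lambda>M j p. 0), s)"

definition formS :: "(('n::finite) g \<Rightarrow> ('n::finite) g \<Rightarrow> complex) \<Rightarrow> ('n::finite) GS \<Rightarrow> ('n::finite) g \<Rightarrow> (('n::finite) mono \<Rightarrow> int \<Rightarrow> complex)" where
  "formS B U a = (\<lambda>M j. B (U M j) a)"

end

theory Submission imports Defs begin

text \<open>Each application of ad u(x) to an element of the form b(z) gives the bracket with u(z),
  the modes of u(x) being absorbed into the powers of z, plus a multiple of c coming from the
  cocycle of the affine bracket; on the iterate (ad u(z))^(k-1) a this multiple is the pairing of
  \<partial>u(z)/\<partial>z with it. Expanding (ad u(z))^(k-1) as a sum over words in the variables and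
  moving all brackets across the invariant form reverses each word and costs (-1)^(k-1), which
  turns the pairing into ((ad u(z))^(k-1) (\<partial>u(z)/\<partial>z), a). The identity is formal: only
  bilinearity and antisymmetry of the bracket and invariance and symmetry of the form are used.\<close>

lemma lie_bracket_add_left: "lie_algebra br \<Longrightarrow> br (x + y) z = br x z + br y z"
  unfolding lie_algebra_def by metis

lemma lie_bracket_add_right: "lie_algebra br \<Longrightarrow> br x (y + z) = br x y + br x z"
  unfolding lie_algebra_def by metis

lemma lie_bracket_scale_right: "lie_algebra br \<Longrightarrow> br x (c *s y) = c *s br x y"
  unfolding lie_algebra_def by metis

lemma lie_bracket_self: "lie_algebra br \<Longrightarrow> br x x = 0"
  unfolding lie_algebra_def by metis

lemma lie_bracket_zero_left: "lie_algebra br \<Longrightarrow> br 0 y = 0"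
  using lie_bracket_add_left[of br 0 0 y] by simp

lemma lie_bracket_zero_right: "lie_algebra br \<Longrightarrow> br x 0 = 0"
  using lie_bracket_add_right[of br x 0 0] by simp

lemma lie_bracket_sum_right: "lie_algebra br \<Longrightarrow> br x (sum g A) = (\<Sum>i\<in>A. br x (g i))"
  by (induction A rule: infinite_finite_induct)
    (simp_all add: lie_bracket_zero_right lie_bracket_add_right)

lemma lie_bracket_antisym: "lie_algebra br \<Longrightarrow> br x y = - br y x"
  using lie_bracket_self[of br "x + y"] lie_bracket_self[of br x] lie_bracket_self[of br y]
  by (simp add: lie_bracket_add_left lie_bracket_add_right eq_neg_iff_add_eq_0)

lemma invariant_form_add_left: "invariant_form br B \<Longrightarrow> B (x + y) z = B x z + B y z"
  unfolding invariant_form_def by metis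

lemma invariant_form_scale_left: "invariant_form br B \<Longrightarrow> B (c *s x) y = c * B x y"
  unfolding invariant_form_def by metis

lemma invariant_form_commute: "invariant_form br B \<Longrightarrow> B x y = B y x"
  unfolding invariant_form_def by metis

lemma invariant_form_bracket: "invariant_form br B \<Longrightarrow> B (br x y) z = B x (br y z)"
  unfolding invariant_form_def by metis
lemma invariant_form_minus_left: "invariant_form br B \<Longrightarrow> B (- x) y = - B x y"
  using invariant_form_scale_left[of br B "-1" x y] by (simp only: vector_sneg_minus1[of x]) simp

lemma invariant_form_zero_left: "invariant_form br B \<Longrightarrow> B 0 y = 0"
  using invariant_form_add_left[of br B 0 0 y] by simp

lemma invariant_form_zero_right: "invariant_form br B \<Longrightarrow> B x 0 = 0"
  using invariant_form_commute[of br B x 0] invariant_form_zero_left[of br B x] by simp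

lemma invariant_form_sum_left:
  "invariant_form br B \<Longrightarrow> B (sum g A) y = (\<Sum>i\<in>A. B (g i) y)"
  by (induction A rule: infinite_finite_induct)
    (simp_all add: invariant_form_zero_left invariant_form_add_left)

lemma invariant_form_sum_right:
  assumes "invariant_form br B"
  shows "B x (sum g A) = (\<Sum>i\<in>A. B x (g i))"
proof -
  have "B x (sum g A) = (\<Sum>i\<in>A. B (g i) x)"
    using assms by (simp only: invariant_form_commute[of br B x] invariant_form_sum_left)
  also have "\<dots> = (\<Sum>i\<in>A. B x (g i))"
    using assms by (intro sum.cong refl) (rule invariant_form_commute)
  finally show ?thesis .
qed

lemma finite_submultisets: "finite {N. N \<subseteq># M}"
proof (rule finite_subset)
  show "{N. N \<subseteq># M} \<subseteq> mset ` {xs. set xs \<subseteq> set_mset M \<and> length xs \<le> size M}"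
  proof
    fix N assume "N \<in> {N. N \<subseteq># M}"
    moreover obtain xs where "N = mset xs" using ex_mset by metis
    ultimately show "N \<in> mset ` {xs. set xs \<subseteq> set_mset M \<and> length xs \<le> size M}"
      by (auto intro!: rev_image_eqI dest: mset_subset_eqD size_mset_mono)
  qed
  show "finite (mset ` {xs. set xs \<subseteq> set_mset M \<and> length xs \<le> size M})"
    by (intro finite_imageI finite_lists_length_le) simp
qed

lemma diff_eq_single_mset_iff:
  assumes "X \<subseteq># M" and "q \<in># M"
  shows "M - X = {#q#} \<longleftrightarrow> X = M - {#q#}"
  using assms by (metis add_diff_cancel_left' insert_DiffM2 subset_mset.le_imp_diff_is_add)

lemma diff_eq_empty_mset_iff: "X \<subseteq># N \<Longrightarrow> N - X = {#} \<longleftrightarrow> X = N"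
  by (metis Diff_eq_empty_iff_mset subset_mset.antisym)

lemma uz_singleton: "fst q \<in> D \<Longrightarrow> uz D f {#q#} j = (if j = snd q then f (fst q) else 0)"
proof -
  assume "fst q \<in> D"
  then have "{q'. {#q#} = {#q'#} \<and> fst q' \<in> D \<and> snd q' = j} = (if j = snd q then {q} else {})"
    by auto
  then show ?thesis unfolding uz_def by simp
qed

lemma uz_eq_0: "\<nexists>q. N = {#q#} \<and> fst q \<in> D \<Longrightarrow> uz D f N j = 0"
  unfolding uz_def by (rule sum.neutral) auto

lemma brS_uz:
  assumes "lie_algebra br"
  shows "brS br (uz D f) V M j =
    (\<Sum>q\<in>{q\<in>set_mset M. fst q \<in> D}. br (f (fst q)) (V (M - {#q#}) (j - snd q)))"
proof -
  define Q where "Q = {q\<in>set_mset M. fst q \<in> D}"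
  define g where "g N = (\<Sum>i\<in>{i. uz D f N i \<noteq> 0}. br (uz D f N i) (V (M - N) (j - i)))" for N
  have g_singleton: "g {#q#} = br (f (fst q)) (V (M - {#q#}) (j - snd q))" if "fst q \<in> D" for q
  proof (cases "f (fst q) = 0")
    case True
    then have "{i. uz D f {#q#} i \<noteq> 0} = {}" using uz_singleton[OF that] by auto
    then show ?thesis unfolding g_def using True lie_bracket_zero_left[OF assms] by simp
  next
    case False
    then have "{i. uz D f {#q#} i \<noteq> 0} = {snd q}" using uz_singleton[OF that] by auto
    then show ?thesis unfolding g_def using uz_singleton[OF that] by simp
  qed
  have g_other: "g N = 0" if "\<nexists>q. N = {#q#} \<and> fst q \<in> D" for N
    unfolding g_def using uz_eq_0[OF that] by simp
  have "brS br (uz D f) V M j = sum g {N. N \<subseteq># M}" unfolding brS_def g_def ..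
  also have "\<dots> = sum g ((\<lambda>q. {#q#}) ` Q)"
    by (rule sum.mono_neutral_right[OF finite_submultisets])
      (auto simp: Q_def intro!: g_other)
  also have "\<dots> = (\<Sum>q\<in>Q. g {#q#})" by (simp add: sum.reindex inj_on_def)
  also have "\<dots> = (\<Sum>q\<in>Q. br (f (fst q)) (V (M - {#q#}) (j - snd q)))"
    by (rule sum.cong) (auto simp: Q_def g_singleton)
  finally show ?thesis unfolding Q_def .
qed

text \<open>The coefficient of c in [u(x), V(z)], produced by the cocycle term
  m (b, b') \<delta>(m, -n) c of the affine bracket.\<close>
definition central_term :: "(('n::finite) g \<Rightarrow> 'n g \<Rightarrow> complex) \<Rightarrow> 'n hd set
    \<Rightarrow> ('n hd \<Rightarrow> 'n g) \<Rightarrow> 'n GS \<Rightarrow> 'n mono \<Rightarrow> int \<Rightarrow> complex" where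
  "central_term B D f V = (\<lambda>M j. \<Sum>q\<in>{q\<in>set_mset M. fst q \<in> D}.
     of_int (snd q) * B (f (fst q)) (V (M - {#q#}) (j - snd q + 1)))"

lemma adUx_realizeW:
  assumes "lie_algebra br" and "fst w = fst (realizeW V)"
  shows "adUx br B D f w = addW (realizeW (brS br (uz D f) V)) (centralW (central_term B D f V))"
proof -
  have shift: "j + (p - s) + 1 = j + p + 1 - s" "j + - s + 1 = j - s + 1" for j p s :: int
    by simp_all
  show ?thesis using assms
    by (simp add: adUx_def addW_def realizeW_def centralW_def central_term_def brS_uz shift)
qed

lemma adUx_power_currentW:
  assumes "lie_algebra br"
  shows "(adUx br B D f ^^ Suc m) (currentW a) =
    addW (realizeW ((brS br (uz D f) ^^ Suc m) (constS a)))
      (centralW (central_term B D f ((brS br (uz D f) ^^ m) (constS a))))"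
proof (induction m)
  case 0
  have "fst (currentW a) = fst (realizeW (constS a))"
    unfolding currentW_def realizeW_def constS_def by (auto simp: fun_eq_iff)
  then show ?case by (simp add: adUx_realizeW[OF assms])
next
  case (Suc m)
  have "(adUx br B D f ^^ Suc (Suc m)) (currentW a) =
      adUx br B D f ((adUx br B D f ^^ Suc m) (currentW a))"
    by simp
  also have "\<dots> = addW (realizeW ((brS br (uz D f) ^^ Suc (Suc m)) (constS a)))
      (centralW (central_term B D f ((brS br (uz D f) ^^ Suc m) (constS a))))"
    unfolding Suc.IH funpow.simps(2)[where f = "brS br (uz D f)"] o_apply
    by (rule adUx_realizeW[OF assms]) (simp add: addW_def realizeW_def centralW_def)
  finally show ?case .
qed

fun ad_word :: "(('n::finite) g \<Rightarrow> 'n g \<Rightarrow> 'n g) \<Rightarrow> ('n hd \<Rightarrow> 'n g)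
    \<Rightarrow> ('n hd \<times> int) list \<Rightarrow> 'n g \<Rightarrow> 'n g" where
  "ad_word br f [] a = a"
| "ad_word br f (q # xs) a = br (f (fst q)) (ad_word br f xs a)"

lemma ad_word_append: "ad_word br f (xs @ ys) a = ad_word br f xs (ad_word br f ys a)"
  by (induction xs) simp_all

lemma ad_word_zero: "lie_algebra br \<Longrightarrow> ad_word br f xs 0 = 0"
  by (induction xs) (simp_all add: lie_bracket_zero_right)

lemma ad_word_scale: "lie_algebra br \<Longrightarrow> ad_word br f xs (c *s y) = c *s ad_word br f xs y"
  by (induction xs) (simp_all add: lie_bracket_scale_right)

lemma ad_word_sum:
  "lie_algebra br \<Longrightarrow> ad_word br f xs (sum g A) = (\<Sum>i\<in>A. ad_word br f xs (g i))"
  by (induction xs) (simp_all add: lie_bracket_sum_right)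

lemma invariant_form_ad_word:
  assumes "lie_algebra br" and "invariant_form br B"
  shows "B (ad_word br f xs y) a = (-1) ^ length xs * B y (ad_word br f (rev xs) a)"
proof (induction xs arbitrary: a)
  case Nil
  show ?case by simp
next
  case (Cons q xs)
  have "B (ad_word br f (q # xs) y) a = - B (ad_word br f xs y) (br (f (fst q)) a)"
    using assms by (simp add: lie_bracket_antisym[of br "f (fst q)"] invariant_form_minus_left
        invariant_form_bracket)
  also have "\<dots> = (-1) ^ length (q # xs) * B y (ad_word br f (rev (q # xs)) a)"
    by (simp add: Cons.IH ad_word_append)
  finally show ?case .
qed

definition sub_words :: "('n::finite) hd set \<Rightarrow> 'n mono \<Rightarrow> nat \<Rightarrow> ('n hd \<times> int) list set"
  where
  "sub_words D M m = {xs. mset xs \<subseteq># M \<and> length xs = m \<and> (\<forall>q\<in>set xs. fst q \<in> D)}"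

abbreviation word_degree :: "('a \<times> int) list \<Rightarrow> int" where
  "word_degree xs \<equiv> sum_list (map snd xs)"

lemma finite_sub_words: "finite (sub_words D M m)"
proof (rule finite_subset)
  show "sub_words D M m \<subseteq> {xs. set xs \<subseteq> set_mset M \<and> length xs = m}"
    unfolding sub_words_def by (auto dest: mset_subset_eqD)
  show "finite {xs. set xs \<subseteq> set_mset M \<and> length xs = m}"
    by (rule finite_lists_length_eq) simp
qed

lemma sub_words_0: "sub_words D M 0 = {[]}"
  unfolding sub_words_def by auto

lemma Cons_mem_sub_words:
  "q # ys \<in> sub_words D M (Suc m) \<longleftrightarrow> q \<in># M \<and> fst q \<in> D \<and> ys \<in> sub_words D (M - {#q#}) m"
  unfolding sub_words_def by (auto simp: insert_subset_eq_iff)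

lemma sub_words_mono: "N \<subseteq># M \<Longrightarrow> sub_words D N m \<subseteq> sub_words D M m"
  unfolding sub_words_def by (auto intro: subset_mset.order_trans)

lemma rev_mem_sub_words: "rev xs \<in> sub_words D M m \<longleftrightarrow> xs \<in> sub_words D M m"
  unfolding sub_words_def by auto

lemma sum_sub_words_Suc:
  "(\<Sum>xs\<in>sub_words D M (Suc m). g xs) =
    (\<Sum>q\<in>{q\<in>set_mset M. fst q \<in> D}. \<Sum>ys\<in>sub_words D (M - {#q#}) m. g (q # ys))"
proof -
  define Q where "Q = {q\<in>set_mset M. fst q \<in> D}"
  have "(\<Sum>xs\<in>sub_words D M (Suc m). g xs) =
      (\<Sum>(q, ys)\<in>Sigma Q (\<lambda>q. sub_words D (M - {#q#}) m). g (q # ys))"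
  proof (rule sum.reindex_bij_witness[where i = "\<lambda>(q, ys). q # ys" and j = "\<lambda>xs. (hd xs, tl xs)"])
    fix xs assume xs: "xs \<in> sub_words D M (Suc m)"
    then obtain q ys where xs_eq: "xs = q # ys" unfolding sub_words_def by (cases xs) auto
    show "(\<lambda>(q, ys). q # ys) (hd xs, tl xs) = xs" by (simp add: xs_eq)
    show "(hd xs, tl xs) \<in> Sigma Q (\<lambda>q. sub_words D (M - {#q#}) m)"
      using xs by (simp add: xs_eq Cons_mem_sub_words Q_def)
    show "(\<lambda>(q, ys). g (q # ys)) (hd xs, tl xs) = g xs" by (simp add: xs_eq)
  qed (auto simp: Cons_mem_sub_words Q_def)
  then show ?thesis by (simp add: sum.Sigma finite_sub_words Q_def)
qed

lemma brS_uz_power: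
  assumes "lie_algebra br"
  shows "(brS br (uz D f) ^^ m) V M j =
    (\<Sum>xs\<in>sub_words D M m. ad_word br f xs (V (M - mset xs) (j - word_degree xs)))"
proof (induction m arbitrary: M j)
  case 0
  show ?case by (simp add: sub_words_0)
next
  case (Suc m)
  have "(brS br (uz D f) ^^ Suc m) V M j =
      (\<Sum>q\<in>{q\<in>set_mset M. fst q \<in> D}. \<Sum>ys\<in>sub_words D (M - {#q#}) m.
         br (f (fst q)) (ad_word br f ys (V (M - {#q#} - mset ys) (j - snd q - word_degree ys))))"
    by (simp add: brS_uz[OF assms] Suc.IH lie_bracket_sum_right[OF assms])
  also have "\<dots> = (\<Sum>xs\<in>sub_words D M (Suc m).
      ad_word br f xs (V (M - mset xs) (j - word_degree xs)))"
    by (simp add: sum_sub_words_Suc algebra_simps)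
  finally show ?case .
qed

lemma dzS_uz:
  assumes "N \<subseteq># M"
  shows "dzS (uz D f) N i = (\<Sum>q\<in>{q\<in>set_mset M. fst q \<in> D \<and> N = {#q#} \<and> snd q = i + 1}.
    of_int (snd q) *s f (fst q))"
proof -
  have "{q. N = {#q#} \<and> fst q \<in> D \<and> snd q = i + 1} =
      {q\<in>set_mset M. fst q \<in> D \<and> N = {#q#} \<and> snd q = i + 1}"
    using assms by auto
  then show ?thesis by (auto simp: dzS_def uz_def vec.scale_sum_right intro!: sum.cong)
qed

lemma central_term_brS_power_constS_expand:
  assumes "lie_algebra br" and "invariant_form br B"
  shows "central_term B D f ((brS br (uz D f) ^^ m) (constS a)) M j =
    (\<Sum>q\<in>{q\<in>set_mset M. fst q \<in> D}. \<Sum>xs\<in>sub_words D M m.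
       if mset xs = M - {#q#} \<and> snd q + word_degree xs = j + 1
       then of_int (snd q) * B (f (fst q)) (ad_word br f xs a) else 0)"
  (is "_ = (\<Sum>q\<in>?Q. \<Sum>xs\<in>_. ?G q xs)")
proof -
  have constS_term: "constS a (M - {#q#} - mset xs) (j - snd q + 1 - word_degree xs) =
      (if mset xs = M - {#q#} \<and> snd q + word_degree xs = j + 1 then a else 0)"
    if "xs \<in> sub_words D (M - {#q#}) m" for q xs
  proof -
    have "M - {#q#} - mset xs = {#} \<longleftrightarrow> mset xs = M - {#q#}"
      using that unfolding sub_words_def by (simp only: mem_Collect_eq diff_eq_empty_mset_iff)
    then show ?thesis unfolding constS_def by auto
  qed
  have "central_term B D f ((brS br (uz D f) ^^ m) (constS a)) M j =
      (\<Sum>q\<in>?Q. of_int (snd q) * B (f (fst q)) (\<Sum>xs\<in>sub_words D (M - {#q#}) m.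
         ad_word br f xs (constS a (M - {#q#} - mset xs) (j - snd q + 1 - word_degree xs))))"
    by (simp only: central_term_def brS_uz_power[OF assms(1)])
  also have "\<dots> = (\<Sum>q\<in>?Q. \<Sum>xs\<in>sub_words D (M - {#q#}) m. ?G q xs)"
    unfolding invariant_form_sum_right[OF assms(2)] sum_distrib_left
    by (intro sum.cong refl) (simp only: constS_term,
        simp add: ad_word_zero[OF assms(1)] invariant_form_zero_right[OF assms(2)])
  also have "\<dots> = (\<Sum>q\<in>?Q. \<Sum>xs\<in>sub_words D M m. ?G q xs)"
    by (intro sum.cong refl sum.mono_neutral_left finite_sub_words sub_words_mono)
      (auto simp: sub_words_def)
  finally show ?thesis .
qed

lemma form_brS_power_dzS_expand:
  assumes "lie_algebra br" and "invariant_form br B"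
  shows "(-1) ^ m * B ((brS br (uz D f) ^^ m) (dzS (uz D f)) M j) a =
    (\<Sum>xs\<in>sub_words D M m. \<Sum>q\<in>{q\<in>set_mset M. fst q \<in> D}.
       if mset xs = M - {#q#} \<and> snd q + word_degree xs = j + 1
       then of_int (snd q) * B (f (fst q)) (ad_word br f (rev xs) a) else 0)"
  (is "_ = (\<Sum>xs\<in>_. \<Sum>q\<in>?Q. ?G q xs)")
proof -
  have "(-1) ^ m * B (ad_word br f xs (dzS (uz D f) (M - mset xs) (j - word_degree xs))) a =
      (\<Sum>q\<in>?Q. ?G q xs)" if "xs \<in> sub_words D M m" for xs
  proof -
    from that have sub: "mset xs \<subseteq># M" and len: "length xs = m"
      unfolding sub_words_def by auto
    have flip: "(-1) ^ m * (c * B (ad_word br f xs y) a) = c * B y (ad_word br f (rev xs) a)"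
      for c y
      by (simp add: invariant_form_ad_word[OF assms] len mult.left_commute
          mult.assoc[symmetric] power_mult_distrib[symmetric])
    have "(-1) ^ m * B (ad_word br f xs (dzS (uz D f) (M - mset xs) (j - word_degree xs))) a =
        (\<Sum>q\<in>{q\<in>set_mset M.
            fst q \<in> D \<and> M - mset xs = {#q#} \<and> snd q = j - word_degree xs + 1}.
          (-1) ^ m * (of_int (snd q) * B (ad_word br f xs (f (fst q))) a))"
      by (simp only: dzS_uz[OF diff_subset_eq_self] ad_word_sum[OF assms(1)]
          ad_word_scale[OF assms(1)] invariant_form_sum_left[OF assms(2)]
          invariant_form_scale_left[OF assms(2)] sum_distrib_left)
    also have "\<dots> = (\<Sum>q\<in>{q\<in>?Q. mset xs = M - {#q#} \<and> snd q + word_degree xs = j + 1}.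
        of_int (snd q) * B (f (fst q)) (ad_word br f (rev xs) a))"
      using sub by (intro sum.cong) (auto simp: diff_eq_single_mset_iff flip)
    also have "\<dots> = (\<Sum>q\<in>?Q. ?G q xs)"
      by (rule sum.inter_filter) simp
    finally show ?thesis .
  qed
  then show ?thesis
    using assms by (simp add: brS_uz_power invariant_form_sum_left sum_distrib_left)
qed

lemma central_term_brS_power_constS:
  assumes "lie_algebra br" and "invariant_form br B"
  shows "central_term B D f ((brS br (uz D f) ^^ m) (constS a)) M j =
    (-1) ^ m * B ((brS br (uz D f) ^^ m) (dzS (uz D f)) M j) a"
proof -
  define G where "G q xs = (if mset xs = M - {#q#} \<and> snd q + word_degree xs = j + 1
    then of_int (snd q) * B (f (fst q)) (ad_word br f xs a) else 0)" for q xs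
  define Q where "Q = {q\<in>set_mset M. fst q \<in> D}"
  have "central_term B D f ((brS br (uz D f) ^^ m) (constS a)) M j =
      (\<Sum>q\<in>Q. \<Sum>xs\<in>sub_words D M m. G q xs)"
    unfolding G_def Q_def by (rule central_term_brS_power_constS_expand[OF assms])
  also have "\<dots> = (\<Sum>q\<in>Q. \<Sum>xs\<in>sub_words D M m. G q (rev xs))"
    by (intro sum.cong refl sum.reindex_bij_witness[where i = rev and j = rev])
      (simp_all add: rev_mem_sub_words)
  also have "\<dots> = (\<Sum>xs\<in>sub_words D M m. \<Sum>q\<in>Q. G q (rev xs))"
    by (rule sum.swap)
  also have "\<dots> = (-1) ^ m * B ((brS br (uz D f) ^^ m) (dzS (uz D f)) M j) a"
    unfolding form_brS_power_dzS_expand[OF assms] G_def Q_def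
    by (simp add: rev_map[symmetric])
  finally show ?thesis .
qed

theorem mainTheorem2:
  fixes br :: "complex ^ ('n::finite) \<Rightarrow> complex ^ 'n \<Rightarrow> complex ^ 'n"
    and B :: "complex ^ ('n::finite) \<Rightarrow> complex ^ 'n \<Rightarrow> complex"
    and h :: "(complex ^ ('n::finite)) set"
    and P S :: "(complex ^ ('n::finite) \<Rightarrow> complex) set"
    and f :: "(complex ^ ('n::finite) \<Rightarrow> complex) \<Rightarrow> complex ^ 'n"
    and a :: "complex ^ ('n::finite)"
    and k :: nat
  assumes "simple_lie br"
    and "cartan_subalgebra br h"
    and "is_base br h P"
    and "S \<subseteq> P"
    and "invariant_form br B"
    and "normalized_form br h P B"
    and "inj_on f (Delta_u br h P S)"
    and "vec.independent (f ` Delta_u br h P S)"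
    and "vec.span (f ` Delta_u br h P S) = ubar br h P S"
    and "k \<ge> 1"
  shows "(adUx br B (Delta_u br h P S) f ^^ k) (currentW a) =
         addW (realizeW ((brS br (uz (Delta_u br h P S) f) ^^ k) (constS a)))
              (centralW (\<lambda>M j. (-1) ^ (k - 1) *
                 formS B ((brS br (uz (Delta_u br h P S) f) ^^ (k - 1))
                            (dzS (uz (Delta_u br h P S) f))) a M j))"
proof -
  define D where "D = Delta_u br h P S"
  obtain m where k: "k = Suc m" using \<open>k \<ge> 1\<close> by (cases k) auto
  have la: "lie_algebra br" using \<open>simple_lie br\<close> unfolding simple_lie_def by blast
  have "central_term B D f ((brS br (uz D f) ^^ m) (constS a)) =
      (\<lambda>M j. (-1) ^ m * formS B ((brS br (uz D f) ^^ m) (dzS (uz D f))) a M j)"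
    by (simp add: fun_eq_iff formS_def central_term_brS_power_constS[OF la \<open>invariant_form br B\<close>])
  then show ?thesis
    unfolding D_def[symmetric] k adUx_power_currentW[OF la] by simp
qed

end
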